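(* Fix $\alpha_0>d/2$. Then for any $s\ge\alpha_0$ and $X,Y\in\mathcal M^s$, $$\|XY\|_s\le K_0\|X\|_{\alpha_0}\|Y\|_s+K_1\|X\|_s\|Y\|_{\alpha_0},$$ where $$K_0=\sqrt{20\sum_{\mathbf k\in\mathbb Z^d}\langle\mathbf k\rangle^{-2\alpha_0}},\qquad K_1=K_1(s)=(1-10^{-\frac{1}{2s}})^{-s}\sqrt{2\sum_{\mathbf k\in\mathbb Z^d}\langle\mathbf k\rangle^{-2\alpha_0}}.$$
   Context: Let $d\ge1$; $|\mathbf k|=\max_v|k_v|$, $\langle\mathbf k\rangle=\max\{1,|\mathbf k|\}$. $(\mathfrak B,\|\cdot\|_{\mathfrak B})$ is a Banach algebra of complex sequences indexed by $\mathbb Z^d$, with pointwise operations, containing the constant sequence $1$ with norm $1$, and translation invariant ($\|\sigma_{\mathbf j}a\|_{\mathfrak B}=\|a\|_{\mathfrak B}$ where $(\sigma_{\mathbf j}a)_{\mathbf i}=a_{\mathbf i-\mathbf j}$). $\mathcal M$ is the set of matrices $A=(a_{\mathbf i,\mathbf j})_{\mathbf i,\mathbf j\in\mathbb Z^d}$ whose $\mathbf k$-diagonals $A_{\mathbf k}=(a_{\mathbf i,\mathbf i-\mathbf k})_{\mathbf i}$ belong to $\mathfrak B$; $\|A\|_s^2=\sum_{\mathbf k}\|A_{\mathbf k}\|_{\mathfrak B}^2\langle\mathbf k\rangle^{2s}$ and $\mathcal M^s=\{A\in\mathcal M:\|A\|_s<\infty\}$. $XY$ is the matrix product $(XY)_{\mathbf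 i,\mathbf j}=\sum_{\mathbf m}X_{\mathbf i,\mathbf m}Y_{\mathbf m,\mathbf j}$. *)

theory Defs
  imports "HOL-Analysis.Analysis"
begin

text \<open>Indices in Z^d are functions 'd \<Rightarrow> int with 'd a finite (nonempty) type, d = CARD('d).
 Sequences are functions (('d \<Rightarrow> int) \<Rightarrow> complex).\<close>

type_synonym 'd seq = "('d \<Rightarrow> int) \<Rightarrow> complex"
type_synonym 'd mat = "('d \<Rightarrow> int) \<Rightarrow> ('d \<Rightarrow> int) \<Rightarrow> complex"

definition supnorm_idx :: "('d::finite \<Rightarrow> int) \<Rightarrow> int" where
  "supnorm_idx k = Max (range (\<lambda>v. \<bar>k v\<bar>))"

definition jbr :: "('d::finite \<Rightarrow> int) \<Rightarrow> real" where
  "jbr k = real_of_int (max 1 (supnorm_idx k))"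

definition shift :: "('d \<Rightarrow> int) \<Rightarrow> 'd seq \<Rightarrow> 'd seq" where
  "shift j a = (\<lambda>i. a (\<lambda>v. i v - j v))"

definition seq_banach_algebra :: "'d seq set \<Rightarrow> ('d seq \<Rightarrow> real) \<Rightarrow> bool" where
  "seq_banach_algebra B N \<longleftrightarrow>
     (\<lambda>_. 0) \<in> B \<and>
     (\<forall>a\<in>B. \<forall>b\<in>B. (\<lambda>i. a i + b i) \<in> B) \<and>
     (\<forall>a\<in>B. \<forall>c. (\<lambda>i. c * a i) \<in> B) \<and>
     (\<forall>a\<in>B. \<forall>b\<in>B. (\<lambda>i. a i * b i) \<in> B) \<and>
     (\<forall>a\<in>B. N a \<ge> 0) \<and>
     (\<forall>a\<in>B. N a = 0 \<longleftrightarrow> a = (\<lambda>_. 0)) \<and>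
     (\<forall>a\<in>B. \<forall>b\<in>B. N (\<lambda>i. a i + b i) \<le> N a + N b) \<and>
     (\<forall>a\<in>B. \<forall>c. N (\<lambda>i. c * a i) = cmod c * N a) \<and>
     (\<forall>a\<in>B. \<forall>b\<in>B. N (\<lambda>i. a i * b i) \<le> N a * N b) \<and>
     (\<forall>f. (\<forall>n. f n \<in> B) \<and>
          (\<forall>e>0. \<exists>M. \<forall>m\<ge>M. \<forall>n\<ge>M. N (\<lambda>i. f m i - f n i) < e)
          \<longrightarrow> (\<exists>a\<in>B. (\<lambda>n. N (\<lambda>i. f n i - a i)) \<longlonglongrightarrow> 0)) \<and>
     (\<lambda>_. 1) \<in> B \<and> N (\<lambda>_. 1) = 1 \<and>
     (\<forall>a\<in>B. \<forall>j. shift j a \<in> B \<and> N (shift j a) = N a)"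

definition diag :: "'d mat \<Rightarrow> ('d \<Rightarrow> int) \<Rightarrow> 'd seq" where
  "diag A k = (\<lambda>i. A i (\<lambda>v. i v - k v))"

definition in_M :: "'d seq set \<Rightarrow> 'd mat \<Rightarrow> bool" where
  "in_M B A \<longleftrightarrow> (\<forall>k. diag A k \<in> B)"

definition msnorm :: "('d::finite seq \<Rightarrow> real) \<Rightarrow> real \<Rightarrow> 'd mat \<Rightarrow> real" where
  "msnorm N s A = sqrt (\<Sum>\<^sub>\<infinity>k. (N (diag A k))\<^sup>2 * jbr k powr (2 * s))"

definition in_Ms :: "'d::finite seq set \<Rightarrow> ('d seq \<Rightarrow> real) \<Rightarrow> real \<Rightarrow> 'd mat \<Rightarrow> bool" where
  "in_Ms B N s A \<longleftrightarrow> in_M B A \<and> (\<lambda>k. (N (diag A k))\<^sup>2 * jbr k powr (2 * s)) summable_on UNIV"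

definition mprod :: "'d mat \<Rightarrow> 'd mat \<Rightarrow> 'd mat" where
  "mprod X Y = (\<lambda>i j. \<Sum>\<^sub>\<infinity>m. X i m * Y m j)"

end

theory Submission
  imports Defs "HOL-Library.Function_Algebras"
begin

(* The k-th diagonal of XY is the series over l of X_l times the shift of Y_(k-l) by l.
   Entries of an element of the algebra are bounded by its norm (otherwise a Neumann series
   would invert a sequence with a zero entry), so by completeness the series converges in the
   algebra and N((XY)_k) <= (x * y)_k, the convolution of x_l = N(X_l) and y_l = N(Y_l).
   It remains to bound the weighted l2 norm of the convolution of two nonnegative sequences.
   Splitting <k>^s <= sqrt 10 <k-l>^s + K <l>^s, with K = (1 - 10^(-1/(2s)))^(-s), moves the
   weight onto one factor; Young's inequality |a * b|_2 <= |a|_1 |b|_2 handles each half,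
   and Cauchy-Schwarz gives |x|_1^2 <= (sum_k <k>^(-2 alpha0)) |x|_alpha0^2, which is finite
   because 2 alpha0 > d. *)

text \<open>These sets turn unordered sums into limits of sequences, which is the form in which the
  completeness of \<open>seq_banach_algebra\<close> is stated.\<close>
definition enum_prefix :: "nat \<Rightarrow> 'a::countable set" where
  "enum_prefix n = {x. to_nat x < n}"

lemma finite_enum_prefix: "finite (enum_prefix n :: 'a::countable set)"
proof -
  have "(enum_prefix n :: 'a set) = to_nat -` {..<n}" unfolding enum_prefix_def by auto
  then show ?thesis by (simp add: finite_vimageI inj_to_nat)
qed

lemma enum_prefix_mono: "n \<le> m \<Longrightarrow> enum_prefix n \<subseteq> enum_prefix m"
  unfolding enum_prefix_def by auto

lemma filterlim_enum_prefix:
  "filterlim (enum_prefix :: nat \<Rightarrow> 'a::countable set) (finite_subsets_at_top UNIV) sequentially"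
  unfolding filterlim_iff
proof (intro allI impI)
  fix P :: "'a set \<Rightarrow> bool"
  assume "eventually P (finite_subsets_at_top UNIV)"
  then obtain X where X: "finite X" "\<And>Y. finite Y \<Longrightarrow> X \<subseteq> Y \<Longrightarrow> P Y"
    unfolding eventually_finite_subsets_at_top by auto
  have "X \<subseteq> enum_prefix n" if "n > Max (insert 0 (to_nat ` X))" for n
    using that X(1) unfolding enum_prefix_def by (auto intro: le_less_trans[OF Max_ge])
  then show "eventually (\<lambda>n. P (enum_prefix n)) sequentially"
    unfolding eventually_sequentially using X(2)[OF finite_enum_prefix] by (meson Suc_le_lessD)
qed

lemma has_sum_imp_LIMSEQ_enum_prefix:
  "(f has_sum S) UNIV \<Longrightarrow> (\<lambda>n. sum f (enum_prefix n)) \<longlonglongrightarrow> S"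
  unfolding has_sum_def using filterlim_compose filterlim_enum_prefix by blast

section \<open>Banach algebras of sequences\<close>

locale seq_banach_alg =
  fixes B :: "'d seq set" and N :: "'d seq \<Rightarrow> real"
  assumes seq_banach_algebra: "seq_banach_algebra B N"
begin

lemma
  shows zero_mem: "(\<lambda>_. 0) \<in> B"
    and add_mem: "a \<in> B \<Longrightarrow> b \<in> B \<Longrightarrow> (\<lambda>i. a i + b i) \<in> B"
    and scale_mem: "a \<in> B \<Longrightarrow> (\<lambda>i. c * a i) \<in> B"
    and mult_mem: "a \<in> B \<Longrightarrow> b \<in> B \<Longrightarrow> (\<lambda>i. a i * b i) \<in> B"
    and one_mem: "(\<lambda>_. 1) \<in> B"
    and shift_mem: "a \<in> B \<Longrightarrow> shift j a \<in> B"
    and N_nonneg: "a \<in> B \<Longrightarrow> 0 \<le> N a"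
    and N_eq_0_iff: "a \<in> B \<Longrightarrow> N a = 0 \<longleftrightarrow> a = (\<lambda>_. 0)"
    and N_add_le: "a \<in> B \<Longrightarrow> b \<in> B \<Longrightarrow> N (\<lambda>i. a i + b i) \<le> N a + N b"
    and N_scale: "a \<in> B \<Longrightarrow> N (\<lambda>i. c * a i) = cmod c * N a"
    and N_mult_le: "a \<in> B \<Longrightarrow> b \<in> B \<Longrightarrow> N (\<lambda>i. a i * b i) \<le> N a * N b"
    and N_one: "N (\<lambda>_. 1) = 1"
    and N_shift: "a \<in> B \<Longrightarrow> N (shift j a) = N a"
    and N_complete: "(\<And>n. f n \<in> B) \<Longrightarrow>
      \<forall>e>0. \<exists>M. \<forall>m\<ge>M. \<forall>n\<ge>M. N (\<lambda>i. f m i - f n i) < e \<Longrightarrow>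
      \<exists>a\<in>B. (\<lambda>n. N (\<lambda>i. f n i - a i)) \<longlonglongrightarrow> 0"
  using seq_banach_algebra unfolding seq_banach_algebra_def by blast+

lemma N_zero: "N (\<lambda>_. 0) = 0"
  using N_eq_0_iff zero_mem by blast

lemma diff_as_scale: "(\<lambda>i. a i - b i) = (\<lambda>i. a i + (\<lambda>i. (-1) * b i) i)" for a b :: "'d seq"
  by simp

lemma diff_mem: "a \<in> B \<Longrightarrow> b \<in> B \<Longrightarrow> (\<lambda>i. a i - b i) \<in> B"
  unfolding diff_as_scale by (intro add_mem scale_mem)

lemma N_diff_le:
  assumes "a \<in> B" "b \<in> B"
  shows "N (\<lambda>i. a i - b i) \<le> N a + N b"
  using N_add_le[OF assms(1) scale_mem[OF assms(2), of "-1"]] N_scale[OF assms(2), of "-1"]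
  unfolding diff_as_scale by simp

lemma N_diff_commute: "a \<in> B \<Longrightarrow> b \<in> B \<Longrightarrow> N (\<lambda>i. a i - b i) = N (\<lambda>i. b i - a i)"
  using N_scale[OF diff_mem, of b a "-1"] by simp

lemma
  assumes "finite F" and "\<And>l. l \<in> F \<Longrightarrow> f l \<in> B"
  shows sum_mem: "(\<lambda>i. \<Sum>l\<in>F. f l i) \<in> B"
    and N_sum_le: "N (\<lambda>i. \<Sum>l\<in>F. f l i) \<le> (\<Sum>l\<in>F. N (f l))"
proof -
  have "(\<lambda>i. \<Sum>l\<in>F. f l i) \<in> B \<and> N (\<lambda>i. \<Sum>l\<in>F. f l i) \<le> (\<Sum>l\<in>F. N (f l))"
    using assms
  proof (induction F rule: finite_induct)
    case empty
    show ?case using zero_mem N_zero by simp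
  next
    case (insert x F)
    then show ?case
      using add_mem[of "f x" "\<lambda>i. \<Sum>l\<in>F. f l i"] N_add_le[of "f x" "\<lambda>i. \<Sum>l\<in>F. f l i"]
      by auto
  qed
  then show "(\<lambda>i. \<Sum>l\<in>F. f l i) \<in> B" "N (\<lambda>i. \<Sum>l\<in>F. f l i) \<le> (\<Sum>l\<in>F. N (f l))"
    by auto
qed

lemma
  assumes "b \<in> B"
  shows power_mem: "(\<lambda>i. b i ^ n) \<in> B"
    and N_power_le: "N (\<lambda>i. b i ^ n) \<le> N b ^ n"
proof -
  have "(\<lambda>i. b i ^ n) \<in> B \<and> N (\<lambda>i. b i ^ n) \<le> N b ^ n"
  proof (induction n)
    case 0
    show ?case using one_mem N_one by simp
  next
    case (Suc n)
    have "N (\<lambda>i. b i * b i ^ n) \<le> N b * N (\<lambda>i. b i ^ n)"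
      using N_mult_le assms Suc by blast
    also have "\<dots> \<le> N b * N b ^ n"
      using Suc N_nonneg[OF assms] by (intro mult_left_mono) auto
    finally show ?case using mult_mem[OF assms] Suc by simp
  qed
  then show "(\<lambda>i. b i ^ n) \<in> B" "N (\<lambda>i. b i ^ n) \<le> N b ^ n" by auto
qed

lemma N_convergent:
  assumes mem: "\<And>n. a n \<in> B"
    and tail: "\<And>m n. n \<le> m \<Longrightarrow> N (\<lambda>i. a m i - a n i) \<le> T n"
    and "T \<longlonglongrightarrow> 0"
  shows "\<exists>e\<in>B. (\<lambda>n. N (\<lambda>i. a n i - e i)) \<longlonglongrightarrow> 0"
proof (rule N_complete[OF mem], intro allI impI)
  fix \<epsilon> :: real
  assume "\<epsilon> > 0"
  then obtain M where M: "\<And>n. n \<ge> M \<Longrightarrow> T n < \<epsilon>"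
    using \<open>T \<longlonglongrightarrow> 0\<close> unfolding lim_sequentially by (metis diff_zero dist_real_def abs_less_iff)
  have "N (\<lambda>i. a m i - a n i) < \<epsilon>" if "m \<ge> M" "n \<ge> M" for m n
  proof (cases "n \<le> m")
    case True
    then show ?thesis using tail M that by fastforce
  next
    case False
    then have "N (\<lambda>i. a n i - a m i) \<le> T m" by (intro tail) simp
    then show ?thesis using M[OF \<open>m \<ge> M\<close>] N_diff_commute[OF mem[of m] mem[of n]] by linarith
  qed
  then show "\<exists>M. \<forall>m\<ge>M. \<forall>n\<ge>M. N (\<lambda>i. a m i - a n i) < \<epsilon>" by blast
qed

lemma N_geometric_partial_sums_diff_le:
  assumes b: "b \<in> B" and "N b < 1" and "n \<le> m"
  shows "N (\<lambda>j. (\<Sum>k<m. b j ^ k) - (\<Sum>k<n. b j ^ k)) \<le> N b ^ n / (1 - N b)"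
proof -
  define r where "r = N b"
  have r: "0 \<le> r" "r < 1" unfolding r_def using N_nonneg[OF b] assms(2) by auto
  have split: "{..<m} = {..<n} \<union> {n..<m}" "{..<n} \<inter> {n..<m} = {}" using \<open>n \<le> m\<close> by auto
  have "N (\<lambda>j. (\<Sum>k<m. b j ^ k) - (\<Sum>k<n. b j ^ k)) = N (\<lambda>j. \<Sum>k\<in>{n..<m}. b j ^ k)"
    unfolding split(1) by (simp add: sum.union_disjoint split(2))
  also have "\<dots> \<le> (\<Sum>k\<in>{n..<m}. N (\<lambda>j. b j ^ k))"
    using power_mem[OF b] by (intro N_sum_le) auto
  also have "\<dots> \<le> (\<Sum>k\<in>{n..<m}. r ^ k)"
    unfolding r_def using N_power_le[OF b] by (intro sum_mono)
  also have "\<dots> = (\<Sum>k<m. r ^ k) - (\<Sum>k<n. r ^ k)"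
    unfolding split(1) by (simp add: sum.union_disjoint split(2))
  also have "\<dots> = (1 - r ^ m) / (1 - r) - (1 - r ^ n) / (1 - r)"
    using r by (simp add: sum_gp_strict)
  also have "\<dots> = (r ^ n - r ^ m) / (1 - r)"
    by (simp add: diff_divide_distrib)
  also have "\<dots> \<le> r ^ n / (1 - r)"
    using r by (intro divide_right_mono) auto
  finally show ?thesis unfolding r_def .
qed

lemma Neumann_partial_sums_convergent:
  assumes b: "b \<in> B" and "N b < 1"
  shows "\<exists>e\<in>B. (\<lambda>n. N (\<lambda>j. (\<Sum>k<n. b j ^ k) - e j)) \<longlonglongrightarrow> 0"
proof (rule N_convergent)
  show "(\<lambda>j. \<Sum>k<n. b j ^ k) \<in> B" for n
    using power_mem[OF b] by (intro sum_mem) auto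
  show "N (\<lambda>j. (\<Sum>k<m. b j ^ k) - (\<Sum>k<n. b j ^ k)) \<le> N b ^ n / (1 - N b)" if "n \<le> m" for m n
    using N_geometric_partial_sums_diff_le[OF assms that] .
  show "(\<lambda>n. N b ^ n / (1 - N b)) \<longlonglongrightarrow> 0"
    using LIMSEQ_power_zero[of "N b"] N_nonneg[OF b] assms(2) by (intro tendsto_divide_zero) auto
qed

lemma Neumann_series:
  assumes b: "b \<in> B" and "N b < 1"
  shows "\<exists>e\<in>B. \<forall>j. e j * (1 - b j) = 1"
proof -
  define r where "r = N b"
  have r: "0 \<le> r" "r < 1" unfolding r_def using N_nonneg[OF b] assms(2) by auto
  define p where "p n = (\<lambda>j. \<Sum>k<n. b j ^ k)" for n
  have p: "p n \<in> B" for n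
    unfolding p_def using power_mem[OF b] by (intro sum_mem) auto
  obtain e where e: "e \<in> B" and lim: "(\<lambda>n. N (\<lambda>j. p n j - e j)) \<longlonglongrightarrow> 0"
    unfolding p_def using Neumann_partial_sums_convergent[OF assms] by blast
  define c where "c = (\<lambda>j. 1 - b j)"
  define q where "q = (\<lambda>j. e j * c j - 1)"
  have c: "c \<in> B" unfolding c_def using diff_mem[OF one_mem b] .
  have q: "q \<in> B" unfolding q_def using diff_mem[OF mult_mem[OF e c] one_mem] .
  have "N q \<le> N (\<lambda>j. p n j - e j) * N c + r ^ n" for n
  proof -
    define u where "u = (\<lambda>j. e j - p n j)"
    have u: "u \<in> B" unfolding u_def using diff_mem[OF e p] .
    have "p n j * c j = 1 - b j ^ n" for j
      unfolding p_def c_def using one_diff_power_eq[of "b j" n] by (simp add: mult.commute)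
    then have "q = (\<lambda>j. u j * c j - b j ^ n)"
      unfolding q_def u_def by (auto simp: algebra_simps)
    then have "N q \<le> N (\<lambda>j. u j * c j) + N (\<lambda>j. b j ^ n)"
      using N_diff_le[OF mult_mem[OF u c] power_mem[OF b]] by simp
    also have "\<dots> \<le> N u * N c + r ^ n"
      using N_mult_le[OF u c] N_power_le[OF b] unfolding r_def by (rule add_mono)
    finally show ?thesis
      unfolding u_def using N_diff_commute[OF e p] by simp
  qed
  moreover have "(\<lambda>n. N (\<lambda>j. p n j - e j) * N c + r ^ n) \<longlonglongrightarrow> 0 * N c + 0"
    using lim LIMSEQ_power_zero[of r] r by (intro tendsto_intros) auto
  ultimately have "N q \<le> 0"
    by (intro LIMSEQ_le_const[where a="N q"]) auto
  then have "q = (\<lambda>_. 0)" using N_nonneg[OF q] N_eq_0_iff[OF q] by simp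
  then have "\<forall>j. e j * (1 - b j) = 1" unfolding q_def c_def by (simp add: fun_eq_iff)
  then show ?thesis using e by blast
qed

text \<open>Otherwise \<open>b = a / a i\<close> would have \<open>N b < 1\<close>, making \<open>1 - b\<close> invertible although it
  vanishes at \<open>i\<close>.\<close>
lemma cmod_le_N:
  assumes a: "a \<in> B"
  shows "cmod (a i) \<le> N a"
proof (rule ccontr)
  assume "\<not> cmod (a i) \<le> N a"
  then have less: "N a < cmod (a i)" and ai: "a i \<noteq> 0"
    using N_nonneg[OF a] by auto
  define b where "b = (\<lambda>j. (1 / a i) * a j)"
  have "N b = N a / cmod (a i)"
    unfolding b_def using N_scale[OF a, of "1 / a i"] by (simp add: norm_divide)
  then have "N b < 1" using less ai by (simp add: divide_less_eq)
  then obtain e where "e i * (1 - b i) = 1"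
    using Neumann_series[OF scale_mem[OF a]] unfolding b_def by blast
  moreover have "b i = 1" unfolding b_def using ai by simp
  ultimately show False by simp
qed

lemma tendsto_entry_of_N:
  assumes "\<And>n. s n \<in> B" "e \<in> B" and "(\<lambda>n. N (\<lambda>i. s n i - e i)) \<longlonglongrightarrow> 0"
  shows "(\<lambda>n. s n i) \<longlonglongrightarrow> e i"
proof -
  have "(\<lambda>n. s n i - e i) \<longlonglongrightarrow> 0"
    using cmod_le_N[OF diff_mem[OF assms(1,2)]] by (intro Lim_null_comparison[OF _ assms(3)]) simp
  then show ?thesis by (rule LIM_zero_cancel)
qed

lemma N_le_of_tendsto:
  assumes "\<And>n. s n \<in> B" "e \<in> B" and "(\<lambda>n. N (\<lambda>i. s n i - e i)) \<longlonglongrightarrow> 0"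
    and "\<And>n. N (s n) \<le> c"
  shows "N e \<le> c"
proof -
  have "N e \<le> c + N (\<lambda>i. s n i - e i)" for n
  proof -
    have "N e = N (\<lambda>i. s n i + (e i - s n i))" by simp
    also have "\<dots> \<le> N (s n) + N (\<lambda>i. e i - s n i)"
      by (rule N_add_le[OF assms(1) diff_mem[OF assms(2,1)]])
    finally show ?thesis using assms(4)[of n] N_diff_commute[OF assms(2) assms(1)[of n]] by linarith
  qed
  moreover have "(\<lambda>n. c + N (\<lambda>i. s n i - e i)) \<longlonglongrightarrow> c + 0"
    using assms(3) by (intro tendsto_add tendsto_const)
  ultimately show "N e \<le> c"
    using LIMSEQ_le_const[where a="N e"] by fastforce
qed

lemma
  fixes f :: "'i::countable \<Rightarrow> 'd seq"
  assumes mem: "\<And>l. f l \<in> B" and summable: "(\<lambda>l. N (f l)) summable_on UNIV"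
  shows infsum_mem: "(\<lambda>i. \<Sum>\<^sub>\<infinity>l. f l i) \<in> B"
    and N_infsum_le: "N (\<lambda>i. \<Sum>\<^sub>\<infinity>l. f l i) \<le> (\<Sum>\<^sub>\<infinity>l. N (f l))"
proof -
  define total where "total = (\<Sum>\<^sub>\<infinity>l. N (f l))"
  define s where "s n = (\<lambda>i. \<Sum>l\<in>enum_prefix n. f l i)" for n
  define T where "T n = total - (\<Sum>l\<in>enum_prefix n. N (f l))" for n
  have partial_le: "(\<Sum>l\<in>F. N (f l)) \<le> total" if "finite F" for F
    unfolding total_def using N_nonneg[OF mem] by (intro finite_sum_le_infsum[OF summable that]) auto
  have s_mem: "s n \<in> B" for n
    unfolding s_def by (rule sum_mem[OF finite_enum_prefix mem])
  have tail: "N (\<lambda>i. s m i - s n i) \<le> T n" if "n \<le> m" for m n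
  proof -
    note sub = enum_prefix_mono[OF that]
    have "(\<lambda>i. s m i - s n i) = (\<lambda>i. \<Sum>l\<in>enum_prefix m - enum_prefix n. f l i)"
      unfolding s_def by (simp add: sum_diff[OF finite_enum_prefix sub])
    then have "N (\<lambda>i. s m i - s n i) \<le> (\<Sum>l\<in>enum_prefix m - enum_prefix n. N (f l))"
      using N_sum_le[of "enum_prefix m - enum_prefix n" f] mem by (simp add: finite_enum_prefix)
    also have "\<dots> = (\<Sum>l\<in>enum_prefix m. N (f l)) - (\<Sum>l\<in>enum_prefix n. N (f l))"
      by (simp add: sum_diff[OF finite_enum_prefix sub])
    finally show ?thesis
      unfolding T_def using partial_le[OF finite_enum_prefix[of m]] by simp
  qed
  have "(\<lambda>n. \<Sum>l\<in>enum_prefix n. N (f l)) \<longlonglongrightarrow> total"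
    unfolding total_def using summable by (intro has_sum_imp_LIMSEQ_enum_prefix has_sum_infsum)
  then have "T \<longlonglongrightarrow> total - total"
    unfolding T_def by (intro tendsto_diff tendsto_const)
  then obtain e where e: "e \<in> B" and lim: "(\<lambda>n. N (\<lambda>i. s n i - e i)) \<longlonglongrightarrow> 0"
    using N_convergent[of s T, OF s_mem tail] by auto
  have "(\<lambda>l. f l i) summable_on UNIV" for i
  proof (rule abs_summable_summable)
    show "(\<lambda>l. norm (f l i)) summable_on UNIV"
      by (rule Infinite_Sum.abs_summable_on_comparison_test'[OF summable]) (use cmod_le_N[OF mem] in auto)
  qed
  then have "(\<lambda>n. s n i) \<longlonglongrightarrow> (\<Sum>\<^sub>\<infinity>l. f l i)" for i
    unfolding s_def by (intro has_sum_imp_LIMSEQ_enum_prefix has_sum_infsum)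
  then have e_eq: "e = (\<lambda>i. \<Sum>\<^sub>\<infinity>l. f l i)"
    using LIMSEQ_unique tendsto_entry_of_N[OF s_mem e lim] by blast
  have "N (s n) \<le> total" for n
    unfolding s_def
    by (rule order_trans[OF N_sum_le[OF finite_enum_prefix mem] partial_le[OF finite_enum_prefix]])
  then show "(\<lambda>i. \<Sum>\<^sub>\<infinity>l. f l i) \<in> B" "N (\<lambda>i. \<Sum>\<^sub>\<infinity>l. f l i) \<le> total"
    using e N_le_of_tendsto[OF s_mem e lim] unfolding e_eq by auto
qed

end

section \<open>Weighted Cauchy-Schwarz and Young inequalities\<close>

lemma
  fixes a c :: "'a \<Rightarrow> real"
  assumes a: "\<And>l. 0 \<le> a l" and c: "\<And>l. 0 \<le> c l"
    and summable_a: "a summable_on UNIV" and summable_ac: "(\<lambda>l. a l * (c l)\<^sup>2) summable_on UNIV"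
  shows summable_on_weighted_mult: "(\<lambda>l. a l * c l) summable_on UNIV"
    and infsum_weighted_Cauchy_Schwarz:
      "(\<Sum>\<^sub>\<infinity>l. a l * c l)\<^sup>2 \<le> (\<Sum>\<^sub>\<infinity>l. a l) * (\<Sum>\<^sub>\<infinity>l. a l * (c l)\<^sup>2)"
proof -
  have "a l * c l \<le> a l + a l * (c l)\<^sup>2" for l
  proof -
    have "a l * (2 * c l) \<le> a l * (1 + (c l)\<^sup>2)"
      using sum_squares_bound[of 1 "c l"] a[of l] by (intro mult_left_mono) (auto simp: power2_eq_square)
    then show ?thesis using mult_nonneg_nonneg[OF a c, of l l] by (simp add: algebra_simps)
  qed
  then show summable: "(\<lambda>l. a l * c l) summable_on UNIV"
    using a c by (intro summable_on_comparison_test[OF summable_on_add[OF summable_a summable_ac]]) auto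
  define A where "A = (\<Sum>\<^sub>\<infinity>l. a l)"
  define C where "C = (\<Sum>\<^sub>\<infinity>l. a l * (c l)\<^sup>2)"
  have "sum (\<lambda>l. a l * c l) F \<le> sqrt (A * C)" if "finite F" for F
  proof -
    have "(\<Sum>l\<in>F. a l * c l) = (\<Sum>l\<in>F. sqrt (a l) * (sqrt (a l) * c l))"
      using a by (simp add: mult.assoc[symmetric])
    also have "\<dots> \<le> sqrt ((\<Sum>l\<in>F. (sqrt (a l))\<^sup>2) * (\<Sum>l\<in>F. (sqrt (a l) * c l)\<^sup>2))"
      by (rule real_le_rsqrt[OF Cauchy_Schwarz_ineq_sum])
    also have "\<dots> = sqrt ((\<Sum>l\<in>F. a l) * (\<Sum>l\<in>F. a l * (c l)\<^sup>2))"
      using a by (simp add: power_mult_distrib)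
    also have "\<dots> \<le> sqrt (A * C)"
      unfolding A_def C_def using a c that
      by (intro real_sqrt_le_mono mult_mono finite_sum_le_infsum summable_a summable_ac
          sum_nonneg infsum_nonneg) auto
    finally show ?thesis .
  qed
  then have "(\<Sum>\<^sub>\<infinity>l. a l * c l) \<le> sqrt (A * C)"
    by (intro infsum_le_finite_sums[OF summable])
  moreover have "0 \<le> (\<Sum>\<^sub>\<infinity>l. a l * c l)" "0 \<le> A * C"
    unfolding A_def C_def using a c by (auto intro!: infsum_nonneg mult_nonneg_nonneg)
  ultimately show "(\<Sum>\<^sub>\<infinity>l. a l * c l)\<^sup>2 \<le> A * C"
    by (metis power_mono real_sqrt_pow2)
qed

definition conv :: "('a::ab_group_add \<Rightarrow> real) \<Rightarrow> ('a \<Rightarrow> real) \<Rightarrow> 'a \<Rightarrow> real" where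
  "conv x y k = (\<Sum>\<^sub>\<infinity>l. x l * y (k - l))"

lemma summable_on_conv_terms_commute:
  "(\<lambda>l. x l * y (k - l)) summable_on UNIV \<longleftrightarrow> (\<lambda>l. y l * x (k - l)) summable_on UNIV"
  for x y :: "'a::ab_group_add \<Rightarrow> real"
  using summable_on_reindex_bij_betw[OF bij_diff[of k], of "\<lambda>l. x l * y (k - l)"]
  by (simp add: mult.commute)

lemma conv_nonneg: "(\<And>l. 0 \<le> x l) \<Longrightarrow> (\<And>l. 0 \<le> y l) \<Longrightarrow> 0 \<le> conv x y k"
  unfolding conv_def by (intro infsum_nonneg mult_nonneg_nonneg)

lemma conv_commute: "conv x y = conv y x"
proof
  fix k
  show "conv x y k = conv y x k"
    unfolding conv_def using infsum_reindex_bij_betw[OF bij_diff[of k], of "\<lambda>l. y l * x (k - l)"]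
    by (simp add: mult.commute)
qed


lemma
  fixes a c :: "'a::ab_group_add \<Rightarrow> real"
  assumes a: "\<And>l. 0 \<le> a l" and c: "\<And>l. 0 \<le> c l"
    and summable_a: "a summable_on UNIV" and summable_c: "c summable_on UNIV"
  shows summable_on_conv_terms_l1: "(\<lambda>l. a l * c (k - l)) summable_on UNIV"
    and summable_on_conv: "conv a c summable_on UNIV"
    and infsum_conv: "(\<Sum>\<^sub>\<infinity>k. conv a c k) = (\<Sum>\<^sub>\<infinity>l. a l) * (\<Sum>\<^sub>\<infinity>l. c l)"
proof -
  define C where "C = (\<Sum>\<^sub>\<infinity>l. c l)"
  have "c m \<le> C" for m
    unfolding C_def using finite_sum_le_infsum[OF summable_c, of "{m}"] c by simp
  then show "(\<lambda>l. a l * c (k - l)) summable_on UNIV" for k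
    using a c by (intro summable_on_comparison_test[OF summable_on_cmult_left[OF summable_a, of C]])
      (auto intro: mult_left_mono)
  have "((\<lambda>k. c (k - l)) has_sum C) UNIV" for l
    unfolding C_def has_sum_reindex_bij_betw[OF bij_diff_right[of l], of c]
    using summable_c by (rule has_sum_infsum)
  then have row: "((\<lambda>k. a l * c (k - l)) has_sum a l * C) UNIV" for l
    by (rule has_sum_cmult_right)
  have "(\<lambda>(l, k). a l * c (k - l)) summable_on UNIV \<times> UNIV"
    by (rule summable_on_SigmaI[where g="\<lambda>l. a l * C"])
      (use row summable_on_cmult_left[OF summable_a] a c in auto)
  then have summable_swap: "(\<lambda>(k, l). a l * c (k - l)) summable_on UNIV \<times> UNIV"
    using summable_on_swap[of "\<lambda>(l, k). a l * c (k - l)" UNIV UNIV] by (simp del: UNIV_Times_UNIV)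
  show "conv a c summable_on UNIV"
    unfolding conv_def using summable_on_SigmaD[OF summable_swap[unfolded case_prod_unfold]]
      \<open>\<And>k. (\<lambda>l. a l * c (k - l)) summable_on UNIV\<close> by simp
  have "(\<Sum>\<^sub>\<infinity>k. conv a c k) = (\<Sum>\<^sub>\<infinity>l. \<Sum>\<^sub>\<infinity>k. a l * c (k - l))"
    unfolding conv_def using infsum_swap_banach[OF summable_swap] by simp
  also have "\<dots> = (\<Sum>\<^sub>\<infinity>l. a l * C)"
    by (intro infsum_cong infsumI row)
  finally show "(\<Sum>\<^sub>\<infinity>k. conv a c k) = (\<Sum>\<^sub>\<infinity>l. a l) * (\<Sum>\<^sub>\<infinity>l. c l)"
    unfolding C_def by (simp add: infsum_cmult_left')
qed

text \<open>By weighted Cauchy-Schwarz, \<open>(conv a b)\<^sup>2 \<le> (\<Sum>a) * conv a b\<^sup>2\<close> pointwise.\<close>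
lemma
  fixes a b :: "'a::ab_group_add \<Rightarrow> real"
  assumes a: "\<And>l. 0 \<le> a l" and b: "\<And>l. 0 \<le> b l"
    and summable_a: "a summable_on UNIV" and summable_b: "(\<lambda>l. (b l)\<^sup>2) summable_on UNIV"
  shows summable_on_conv_terms: "(\<lambda>l. a l * b (k - l)) summable_on UNIV"
    and summable_on_conv_sq: "(\<lambda>k. (conv a b k)\<^sup>2) summable_on UNIV"
    and infsum_conv_sq_le: "(\<Sum>\<^sub>\<infinity>k. (conv a b k)\<^sup>2) \<le> (\<Sum>\<^sub>\<infinity>l. a l)\<^sup>2 * (\<Sum>\<^sub>\<infinity>l. (b l)\<^sup>2)"
proof -
  define A where "A = (\<Sum>\<^sub>\<infinity>l. a l)"
  note conv_sq = summable_on_conv_terms_l1 summable_on_conv infsum_conv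
  note b_sq = conv_sq[OF a _ summable_a summable_b, simplified]
  have CS: "(\<lambda>l. a l * b (k - l)) summable_on UNIV"
    "(conv a b k)\<^sup>2 \<le> A * conv a (\<lambda>l. (b l)\<^sup>2) k" for k
    using summable_on_weighted_mult[OF a b summable_a b_sq(1)]
      infsum_weighted_Cauchy_Schwarz[OF a b summable_a b_sq(1)]
    unfolding conv_def A_def by auto
  then show "(\<lambda>l. a l * b (k - l)) summable_on UNIV" by blast
  have summable_bound: "(\<lambda>k. A * conv a (\<lambda>l. (b l)\<^sup>2) k) summable_on UNIV"
    using b_sq(2) by (rule summable_on_cmult_right)
  show summable: "(\<lambda>k. (conv a b k)\<^sup>2) summable_on UNIV"
    by (rule summable_on_comparison_test[OF summable_bound]) (use CS in auto)
  have "(\<Sum>\<^sub>\<infinity>k. (conv a b k)\<^sup>2) \<le> (\<Sum>\<^sub>\<infinity>k. A * conv a (\<lambda>l. (b l)\<^sup>2) k)"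
    using summable summable_bound CS by (intro infsum_mono) auto
  also have "\<dots> = A\<^sup>2 * (\<Sum>\<^sub>\<infinity>l. (b l)\<^sup>2)"
    using b_sq(3) unfolding A_def by (simp add: infsum_cmult_right' power2_eq_square)
  finally show "(\<Sum>\<^sub>\<infinity>k. (conv a b k)\<^sup>2) \<le> (\<Sum>\<^sub>\<infinity>l. a l)\<^sup>2 * (\<Sum>\<^sub>\<infinity>l. (b l)\<^sup>2)"
    unfolding A_def .
qed

section \<open>The weight \<open>jbr\<close>\<close>

lemma abs_le_supnorm_idx: "\<bar>k v\<bar> \<le> supnorm_idx k"
  unfolding supnorm_idx_def by (rule Max_ge) auto

lemma jbr_ge_1: "1 \<le> jbr k"
  unfolding jbr_def by simp

lemma jbr_pos: "0 < jbr k"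
  using jbr_ge_1[of k] by simp

lemma jbr_neq_0: "jbr k \<noteq> 0"
  using jbr_pos[of k] by simp

lemma jbr_ge_component: "real_of_int (max 1 \<bar>k v\<bar>) \<le> jbr k"
  unfolding jbr_def using abs_le_supnorm_idx[of k v] by simp

lemma jbr_diff_le: "jbr k \<le> jbr l + jbr (k - l)"
proof -
  have "\<bar>k v\<bar> \<le> supnorm_idx l + supnorm_idx (k - l)" for v
    using abs_le_supnorm_idx[of l v] abs_le_supnorm_idx[of "k - l" v] by simp
  then have "supnorm_idx k \<le> supnorm_idx l + supnorm_idx (k - l)"
    unfolding supnorm_idx_def[of k] by (simp add: Max_le_iff)
  then show ?thesis unfolding jbr_def by simp
qed

lemma summable_on_int_powr: "(\<lambda>n::int. real_of_int (max 1 \<bar>n\<bar>) powr (-p)) summable_on UNIV"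
  if "1 < p"
proof -
  define g where "g n = real_of_int (max 1 \<bar>n\<bar>) powr (-p)" for n :: int
  have "summable (\<lambda>n. real n powr (-p))"
    using that by (simp add: summable_real_powr_iff)
  moreover have "\<forall>\<^sub>F n in sequentially. g (int n) = real n powr (-p)"
    unfolding eventually_sequentially g_def by (intro exI[of _ 1]) auto
  ultimately have "summable (\<lambda>n. g (int n))"
    using summable_cong by fastforce
  then have "(\<lambda>n. g (int n)) summable_on UNIV"
    unfolding g_def by (intro summable_nonneg_imp_summable_on) auto
  moreover have "g (- int n) = g (int n)" for n
    unfolding g_def by simp
  ultimately have "g summable_on range int" "g summable_on range (\<lambda>n. - int n)"
    using summable_on_reindex[of int UNIV g] summable_on_reindex[of "\<lambda>n. - int n" UNIV g]
    by (simp_all add: o_def inj_def)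
  moreover have "(UNIV :: int set) = range int \<union> range (\<lambda>n. - int n)"
    by (auto intro: int_cases2)
  ultimately show ?thesis
    unfolding g_def[symmetric] by (metis summable_on_union)
qed

text \<open>Since \<open>\<langle>k\<rangle>\<close> dominates every \<open>max 1 \<bar>k v\<bar>\<close>, the sum is bounded by the
  \<open>d\<close>-fold product of a convergent sum over \<open>\<int>\<close>.\<close>
lemma summable_on_jbr_powr:
  assumes "real CARD('d) < p"
  shows "(\<lambda>k::'d::finite \<Rightarrow> int. jbr k powr (-p)) summable_on UNIV"
proof -
  define d where "d = CARD('d)"
  define q where "q = p / real d"
  define g where "g n = real_of_int (max 1 \<bar>n\<bar>) powr (-q)" for n :: int
  have "d > 0" unfolding d_def by simp
  then have "1 < q" unfolding q_def d_def using assms by (simp add: field_simps)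
  then have "g summable_on UNIV" unfolding g_def by (rule summable_on_int_powr)
  moreover have "g 0 \<le> infsum g UNIV" "0 < g 0"
    using finite_sum_le_infsum[OF \<open>g summable_on UNIV\<close>, of "{0}"] by (auto simp: g_def)
  moreover have "(\<lambda>n. norm (g n)) = g"
    unfolding g_def by auto
  then have "(\<lambda>n. norm (g n)) summable_on UNIV"
    using \<open>g summable_on UNIV\<close> by simp
  then have "infsum (\<lambda>k::'d \<Rightarrow> int. \<Prod>v\<in>UNIV. g (k v)) UNIV = (\<Prod>v\<in>(UNIV::'d set). infsum g UNIV)"
    using infsum_prod_PiE_abs[where f="\<lambda>_. g" and A="UNIV :: 'd set" and B="\<lambda>_. UNIV"] by simp
  \<comment> \<open>a family that is not summable has sum \<open>0\<close>, so the nonzero product is summable\<close>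
  ultimately have "(\<lambda>k::'d \<Rightarrow> int. \<Prod>v\<in>UNIV. g (k v)) summable_on UNIV"
    using infsum_not_exists by fastforce
  then show ?thesis
  proof (rule summable_on_comparison_test)
    fix k :: "'d \<Rightarrow> int"
    have "jbr k powr (-p) = (\<Prod>v\<in>(UNIV::'d set). jbr k powr (-q))"
      using \<open>d > 0\<close> jbr_pos[of k]
      by (simp add: q_def d_def powr_realpow[symmetric] powr_powr)
    also have "\<dots> \<le> (\<Prod>v\<in>UNIV. g (k v))"
      unfolding g_def using \<open>1 < q\<close> jbr_ge_component[of k]
      by (intro prod_mono conjI powr_mono2') auto
    finally show "jbr k powr (-p) \<le> (\<Prod>v\<in>UNIV. g (k v))" .
  qed simp
qed

lemma powr_le_split:
  fixes K L D t s :: real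
  assumes "0 < K" "0 \<le> L" "0 \<le> D" "K \<le> L + D" "0 < t" "t < 1" "0 < s"
  shows "K powr s \<le> t powr (-s) * D powr s + (1 - t) powr (-s) * L powr s"
proof (cases "(1 - t) * K \<le> L")
  case True
  then have "K powr s \<le> (L / (1 - t)) powr s"
    using assms by (intro powr_mono2) (auto simp: field_simps)
  then have "K powr s \<le> (1 - t) powr (-s) * L powr s"
    using assms by (simp add: powr_divide powr_minus_divide)
  then show ?thesis by (simp add: add_increasing)
next
  case False
  then have "K powr s \<le> (D / t) powr s"
    using assms by (intro powr_mono2) (auto simp: field_simps)
  then have "K powr s \<le> t powr (-s) * D powr s"
    using assms by (simp add: powr_divide powr_minus_divide)
  then show ?thesis by (simp add: add_increasing2)
qed

text \<open>The constant \<open>10\<close> of the paper: the splitting point \<open>t = 10 powr (-1 / (2 * s))\<close>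
  makes \<open>t powr (-s) = sqrt 10\<close>.\<close>
lemma jbr_powr_le_split:
  assumes "0 < s"
  shows "jbr k powr s \<le> sqrt 10 * jbr (k - l) powr s
    + (1 - 10 powr (-1 / (2 * s))) powr (-s) * jbr l powr s"
proof -
  define t where "t = 10 powr (-1 / (2 * s))"
  have "t < 1" unfolding t_def using assms by (intro powr_less_one) auto
  moreover have "t powr (-s) = sqrt 10"
    unfolding t_def using assms by (simp add: powr_powr powr_half_sqrt)
  ultimately show ?thesis
    using powr_le_split[of "jbr k" "jbr l" "jbr (k - l)" t s] jbr_pos[of k] jbr_pos[of l]
      jbr_pos[of "k - l"] jbr_diff_le[of k l] assms
    unfolding t_def by simp
qed

section \<open>Weighted square sums of convolutions\<close>

definition weighted_sq_sum :: "real \<Rightarrow> (('d::finite \<Rightarrow> int) \<Rightarrow> real) \<Rightarrow> real" where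
  "weighted_sq_sum s x = (\<Sum>\<^sub>\<infinity>k. (x k)\<^sup>2 * jbr k powr (2 * s))"

definition weighted_sq_summable :: "real \<Rightarrow> (('d::finite \<Rightarrow> int) \<Rightarrow> real) \<Rightarrow> bool" where
  "weighted_sq_summable s x \<longleftrightarrow> (\<lambda>k. (x k)\<^sup>2 * jbr k powr (2 * s)) summable_on UNIV"

lemma weighted_sq_eq: "(x k)\<^sup>2 * jbr k powr (2 * s) = (x k * jbr k powr s)\<^sup>2"
  using jbr_pos[of k] by (simp add: power_mult_distrib power2_eq_square powr_add[symmetric])

lemma weighted_sq_summable_iff:
  "weighted_sq_summable s x \<longleftrightarrow> (\<lambda>k. (x k * jbr k powr s)\<^sup>2) summable_on UNIV"
  unfolding weighted_sq_summable_def weighted_sq_eq ..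

lemma weighted_sq_sum_eq: "weighted_sq_sum s x = (\<Sum>\<^sub>\<infinity>k. (x k * jbr k powr s)\<^sup>2)"
  unfolding weighted_sq_sum_def weighted_sq_eq ..

lemma weighted_sq_sum_nonneg: "0 \<le> weighted_sq_sum s x"
  unfolding weighted_sq_sum_def by (intro infsum_nonneg) auto

lemma weighted_sq_summable_0: "weighted_sq_summable 0 x \<longleftrightarrow> (\<lambda>k. (x k)\<^sup>2) summable_on UNIV"
  unfolding weighted_sq_summable_def by (simp add: jbr_neq_0)

lemma weighted_sq_summable_mono:
  assumes "t \<le> s" "weighted_sq_summable s x"
  shows "weighted_sq_summable t x"
  using assms(2) unfolding weighted_sq_summable_def
proof (rule summable_on_comparison_test)
  show "(x k)\<^sup>2 * jbr k powr (2 * t) \<le> (x k)\<^sup>2 * jbr k powr (2 * s)" for k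
    using assms(1) jbr_ge_1[of k] by (intro mult_left_mono powr_mono) auto
qed simp

lemma
  assumes "\<And>k. 0 \<le> x k" "\<And>k. x k \<le> y k" and summable_y: "weighted_sq_summable s y"
  shows weighted_sq_summable_le: "weighted_sq_summable s x"
    and weighted_sq_sum_le: "weighted_sq_sum s x \<le> weighted_sq_sum s y"
proof -
  have le: "(x k)\<^sup>2 * jbr k powr (2 * s) \<le> (y k)\<^sup>2 * jbr k powr (2 * s)" for k
    using assms(1,2)[of k] by (intro mult_right_mono power_mono) simp_all
  note summable_y = summable_y[unfolded weighted_sq_summable_def]
  show summable_x: "weighted_sq_summable s x"
    unfolding weighted_sq_summable_def by (rule summable_on_comparison_test[OF summable_y le]) simp
  show "weighted_sq_sum s x \<le> weighted_sq_sum s y"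
    unfolding weighted_sq_sum_def
    by (rule infsum_mono[OF summable_x[unfolded weighted_sq_summable_def] summable_y le])
qed

lemma
  fixes x :: "('d::finite \<Rightarrow> int) \<Rightarrow> real"
  assumes x: "\<And>k. 0 \<le> x k"
    and summable_jbr: "(\<lambda>k::'d \<Rightarrow> int. jbr k powr (-2 * \<alpha>)) summable_on UNIV"
    and summable_x: "weighted_sq_summable \<alpha> x"
  shows summable_on_of_weighted_sq: "x summable_on UNIV"
    and infsum_sq_le_weighted_sq_sum:
      "(\<Sum>\<^sub>\<infinity>k. x k)\<^sup>2 \<le> (\<Sum>\<^sub>\<infinity>k::'d \<Rightarrow> int. jbr k powr (-2 * \<alpha>)) * weighted_sq_sum \<alpha> x"
proof -
  define a where "a k = jbr k powr (-2 * \<alpha>)" for k :: "'d \<Rightarrow> int"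
  define c where "c k = x k * jbr k powr (2 * \<alpha>)" for k :: "'d \<Rightarrow> int"
  have cancel: "jbr k powr (-2 * \<alpha>) * jbr k powr (2 * \<alpha>) = 1" for k :: "'d \<Rightarrow> int"
    using jbr_pos[of k] by (simp add: powr_add[symmetric])
  have ac: "a k * c k = x k" and acc: "a k * (c k)\<^sup>2 = (x k)\<^sup>2 * jbr k powr (2 * \<alpha>)" for k
    unfolding a_def c_def using cancel[of k]
    by (simp_all add: power2_eq_square algebra_simps)
  have a: "0 \<le> a k" and c: "0 \<le> c k" for k
    unfolding a_def c_def using x by auto
  have summable_a: "a summable_on UNIV"
    unfolding a_def by (rule summable_jbr)
  have summable_acc: "(\<lambda>k. a k * (c k)\<^sup>2) summable_on UNIV"
    unfolding acc using summable_x unfolding weighted_sq_summable_def .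
  show "x summable_on UNIV"
    using summable_on_weighted_mult[OF a c summable_a summable_acc] unfolding ac .
  show "(\<Sum>\<^sub>\<infinity>k. x k)\<^sup>2 \<le> (\<Sum>\<^sub>\<infinity>k::'d \<Rightarrow> int. jbr k powr (-2 * \<alpha>)) * weighted_sq_sum \<alpha> x"
    using infsum_weighted_Cauchy_Schwarz[OF a c summable_a summable_acc]
    unfolding ac acc unfolding a_def weighted_sq_sum_def .
qed


lemma conv_mult_jbr_powr_le:
  fixes x y :: "('d::finite \<Rightarrow> int) \<Rightarrow> real"
  assumes x: "\<And>l. 0 \<le> x l" and y: "\<And>l. 0 \<le> y l" and "0 < s"
    and summable: "(\<lambda>l. x l * y (k - l)) summable_on UNIV"
    and summable_y': "(\<lambda>l. x l * (y (k - l) * jbr (k - l) powr s)) summable_on UNIV"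
    and summable_x': "(\<lambda>l. x l * jbr l powr s * y (k - l)) summable_on UNIV"
  shows "conv x y k * jbr k powr s \<le> sqrt 10 * conv x (\<lambda>l. y l * jbr l powr s) k
      + (1 - 10 powr (-1 / (2 * s))) powr (-s) * conv (\<lambda>l. x l * jbr l powr s) y k"
proof -
  define C where "C = (1 - 10 powr (-1 / (2 * s))) powr (-s)"
  have "x l * y (k - l) * jbr k powr s
      \<le> sqrt 10 * (x l * (y (k - l) * jbr (k - l) powr s)) + C * (x l * jbr l powr s * y (k - l))" for l
  proof -
    have "x l * y (k - l) * jbr k powr s
        \<le> x l * y (k - l) * (sqrt 10 * jbr (k - l) powr s + C * jbr l powr s)"
      unfolding C_def using jbr_powr_le_split[OF \<open>0 < s\<close>, of k l] x y by (intro mult_left_mono) auto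
    then show ?thesis by (simp add: algebra_simps)
  qed
  then have "(\<Sum>\<^sub>\<infinity>l. x l * y (k - l) * jbr k powr s)
      \<le> (\<Sum>\<^sub>\<infinity>l. sqrt 10 * (x l * (y (k - l) * jbr (k - l) powr s)) + C * (x l * jbr l powr s * y (k - l)))"
    by (intro infsum_mono summable_on_add summable_on_cmult_right summable_on_cmult_left
        summable summable_y' summable_x')
  also have "\<dots> = sqrt 10 * (\<Sum>\<^sub>\<infinity>l. x l * (y (k - l) * jbr (k - l) powr s))
      + C * (\<Sum>\<^sub>\<infinity>l. x l * jbr l powr s * y (k - l))"
    by (simp add: infsum_add summable_on_cmult_right summable_y' summable_x' infsum_cmult_right')
  finally show ?thesis
    unfolding conv_def C_def by (simp add: infsum_cmult_left')
qed

lemma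
  fixes x :: "('d::finite \<Rightarrow> int) \<Rightarrow> real"
  assumes x: "\<And>l. 0 \<le> x l" and b: "\<And>l. 0 \<le> b l"
    and summable_jbr: "(\<lambda>k::'d \<Rightarrow> int. jbr k powr (-2 * \<alpha>)) summable_on UNIV"
    and x_\<alpha>: "weighted_sq_summable \<alpha> x" and b_sq: "(\<lambda>l. (b l)\<^sup>2) summable_on UNIV"
  shows summable_on_conv_sq_of_weighted: "(\<lambda>k. (conv x b k)\<^sup>2) summable_on UNIV"
    and infsum_conv_sq_le_weighted_sq_sum: "(\<Sum>\<^sub>\<infinity>k. (conv x b k)\<^sup>2)
      \<le> (\<Sum>\<^sub>\<infinity>k::'d \<Rightarrow> int. jbr k powr (-2 * \<alpha>)) * weighted_sq_sum \<alpha> x * (\<Sum>\<^sub>\<infinity>l. (b l)\<^sup>2)"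
proof -
  note x_l1 = summable_on_of_weighted_sq[OF x summable_jbr x_\<alpha>]
  show "(\<lambda>k. (conv x b k)\<^sup>2) summable_on UNIV"
    by (rule summable_on_conv_sq[OF x b x_l1 b_sq])
  have "0 \<le> (\<Sum>\<^sub>\<infinity>l. (b l)\<^sup>2)" by (intro infsum_nonneg) simp
  then show "(\<Sum>\<^sub>\<infinity>k. (conv x b k)\<^sup>2)
      \<le> (\<Sum>\<^sub>\<infinity>k::'d \<Rightarrow> int. jbr k powr (-2 * \<alpha>)) * weighted_sq_sum \<alpha> x * (\<Sum>\<^sub>\<infinity>l. (b l)\<^sup>2)"
    using infsum_conv_sq_le[OF x b x_l1 b_sq] infsum_sq_le_weighted_sq_sum[OF x summable_jbr x_\<alpha>]
    by (meson mult_right_mono order_trans)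
qed

lemma conv_sq_mult_jbr_powr_le:
  fixes x y :: "('d::finite \<Rightarrow> int) \<Rightarrow> real"
  assumes x: "\<And>l. 0 \<le> x l" and y: "\<And>l. 0 \<le> y l" and "0 < s"
    and x_l1: "x summable_on UNIV" and y_l1: "y summable_on UNIV"
    and x_s: "weighted_sq_summable s x" and y_s: "weighted_sq_summable s y"
  shows "(conv x y k)\<^sup>2 * jbr k powr (2 * s) \<le> 20 * (conv x (\<lambda>l. y l * jbr l powr s) k)\<^sup>2
      + 2 * ((1 - 10 powr (-1 / (2 * s))) powr (-s))\<^sup>2 * (conv y (\<lambda>l. x l * jbr l powr s) k)\<^sup>2"
proof -
  define C where "C = (1 - 10 powr (-1 / (2 * s))) powr (-s)"
  define u where "u = conv x (\<lambda>l. y l * jbr l powr s) k"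
  define v where "v = conv y (\<lambda>l. x l * jbr l powr s) k"
  have y_sq: "(\<lambda>l. (y l)\<^sup>2) summable_on UNIV"
    unfolding weighted_sq_summable_0[symmetric]
    using \<open>0 < s\<close> y_s by (intro weighted_sq_summable_mono[of 0 s]) auto
  have x': "0 \<le> x l * jbr l powr s" and y': "0 \<le> y l * jbr l powr s" for l
    using x y by simp_all
  have x'_sq: "(\<lambda>l. (x l * jbr l powr s)\<^sup>2) summable_on UNIV"
    and y'_sq: "(\<lambda>l. (y l * jbr l powr s)\<^sup>2) summable_on UNIV"
    using x_s y_s unfolding weighted_sq_summable_iff .
  have "(\<lambda>l. x l * jbr l powr s * y (k - l)) summable_on UNIV"
    using summable_on_conv_terms_commute[of "\<lambda>l. x l * jbr l powr s" y k]
      summable_on_conv_terms[OF y x' y_l1 x'_sq] by simp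
  then have "conv x y k * jbr k powr s \<le> sqrt 10 * u + C * v"
    unfolding u_def v_def C_def conv_commute[of y]
    by (rule conv_mult_jbr_powr_le[OF x y \<open>0 < s\<close> summable_on_conv_terms[OF x y x_l1 y_sq]
          summable_on_conv_terms[OF x y' x_l1 y'_sq]])
  moreover have "0 \<le> conv x y k" using x y by (rule conv_nonneg)
  ultimately have "(conv x y k * jbr k powr s)\<^sup>2 \<le> (sqrt 10 * u + C * v)\<^sup>2"
    by (intro power_mono) auto
  also have "\<dots> \<le> 2 * (sqrt 10 * u)\<^sup>2 + 2 * (C * v)\<^sup>2"
    using sum_squares_bound[of "sqrt 10 * u" "C * v"] by (simp add: power2_eq_square algebra_simps)
  finally show ?thesis
    unfolding u_def v_def C_def by (simp add: weighted_sq_eq power_mult_distrib)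
qed

lemma
  fixes x y :: "('d::finite \<Rightarrow> int) \<Rightarrow> real"
  assumes x: "\<And>l. 0 \<le> x l" and y: "\<And>l. 0 \<le> y l" and "0 < s" "\<alpha> \<le> s"
    and summable_jbr: "(\<lambda>k::'d \<Rightarrow> int. jbr k powr (-2 * \<alpha>)) summable_on UNIV"
    and x_s: "weighted_sq_summable s x" and y_s: "weighted_sq_summable s y"
  shows summable_on_conv_terms_of_weighted: "(\<lambda>l. x l * y (k - l)) summable_on UNIV"
    and weighted_sq_summable_conv: "weighted_sq_summable s (conv x y)"
    and weighted_sq_sum_conv_le: "weighted_sq_sum s (conv x y) \<le>
      20 * ((\<Sum>\<^sub>\<infinity>k::'d \<Rightarrow> int. jbr k powr (-2 * \<alpha>)) * weighted_sq_sum \<alpha> x * weighted_sq_sum s y)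
      + 2 * ((1 - 10 powr (-1 / (2 * s))) powr (-s))\<^sup>2
        * ((\<Sum>\<^sub>\<infinity>k::'d \<Rightarrow> int. jbr k powr (-2 * \<alpha>)) * weighted_sq_sum \<alpha> y * weighted_sq_sum s x)"
proof -
  define S where "S = (\<Sum>\<^sub>\<infinity>k::'d \<Rightarrow> int. jbr k powr (-2 * \<alpha>))"
  define C where "C = (1 - 10 powr (-1 / (2 * s))) powr (-s)"
  define u where "u = conv x (\<lambda>l. y l * jbr l powr s)"
  define v where "v = conv y (\<lambda>l. x l * jbr l powr s)"
  have x_\<alpha>: "weighted_sq_summable \<alpha> x" and y_\<alpha>: "weighted_sq_summable \<alpha> y"
    using weighted_sq_summable_mono \<open>\<alpha> \<le> s\<close> x_s y_s by blast+
  note x_l1 = summable_on_of_weighted_sq[OF x summable_jbr x_\<alpha>]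
  note y_l1 = summable_on_of_weighted_sq[OF y summable_jbr y_\<alpha>]
  have y_sq: "(\<lambda>l. (y l)\<^sup>2) summable_on UNIV"
    unfolding weighted_sq_summable_0[symmetric]
    using \<open>0 < s\<close> y_s by (intro weighted_sq_summable_mono[of 0 s]) auto
  show "(\<lambda>l. x l * y (k - l)) summable_on UNIV" for k
    by (rule summable_on_conv_terms[OF x y x_l1 y_sq])
  note pointwise = conv_sq_mult_jbr_powr_le[OF x y \<open>0 < s\<close> x_l1 y_l1 x_s y_s, folded C_def u_def v_def]
  note young = summable_on_conv_sq_of_weighted infsum_conv_sq_le_weighted_sq_sum
  note u = young[OF x _ summable_jbr x_\<alpha> y_s[unfolded weighted_sq_summable_iff],
      folded u_def S_def weighted_sq_sum_eq]
  note v = young[OF y _ summable_jbr y_\<alpha> x_s[unfolded weighted_sq_summable_iff],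
      folded v_def S_def weighted_sq_sum_eq]
  have summable_uv: "(\<lambda>k. 20 * (u k)\<^sup>2 + 2 * C\<^sup>2 * (v k)\<^sup>2) summable_on UNIV"
    using u(1) v(1) x y by (intro summable_on_add summable_on_cmult_right) auto
  then show summable: "weighted_sq_summable s (conv x y)"
    unfolding weighted_sq_summable_def using pointwise
    by (intro summable_on_comparison_test[OF summable_uv]) auto
  have "weighted_sq_sum s (conv x y) \<le> (\<Sum>\<^sub>\<infinity>k. 20 * (u k)\<^sup>2 + 2 * C\<^sup>2 * (v k)\<^sup>2)"
    using summable summable_uv pointwise
    unfolding weighted_sq_sum_def weighted_sq_summable_def by (intro infsum_mono)
  also have "\<dots> = 20 * (\<Sum>\<^sub>\<infinity>k. (u k)\<^sup>2) + 2 * C\<^sup>2 * (\<Sum>\<^sub>\<infinity>k. (v k)\<^sup>2)"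
    using u(1) v(1) x y
    by (simp add: infsum_add summable_on_cmult_right infsum_cmult_right')
  also have "\<dots> \<le> 20 * (S * weighted_sq_sum \<alpha> x * weighted_sq_sum s y)
      + 2 * C\<^sup>2 * (S * weighted_sq_sum \<alpha> y * weighted_sq_sum s x)"
    using u(2) v(2) x y by (intro add_mono mult_left_mono) auto
  finally show "weighted_sq_sum s (conv x y) \<le> 20 * (S * weighted_sq_sum \<alpha> x * weighted_sq_sum s y)
      + 2 * C\<^sup>2 * (S * weighted_sq_sum \<alpha> y * weighted_sq_sum s x)" .
qed

lemma sqrt_weighted_sq_sum_conv_le:
  fixes x y :: "('d::finite \<Rightarrow> int) \<Rightarrow> real"
  assumes "\<And>l. 0 \<le> x l" "\<And>l. 0 \<le> y l" "0 < s" "\<alpha> \<le> s"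
    and summable_jbr: "(\<lambda>k::'d \<Rightarrow> int. jbr k powr (-2 * \<alpha>)) summable_on UNIV"
    and "weighted_sq_summable s x" "weighted_sq_summable s y"
  shows "sqrt (weighted_sq_sum s (conv x y)) \<le>
      sqrt (20 * (\<Sum>\<^sub>\<infinity>k::'d \<Rightarrow> int. jbr k powr (-2 * \<alpha>)))
        * sqrt (weighted_sq_sum \<alpha> x) * sqrt (weighted_sq_sum s y)
      + (1 - 10 powr (-1 / (2 * s))) powr (-s) * sqrt (2 * (\<Sum>\<^sub>\<infinity>k::'d \<Rightarrow> int. jbr k powr (-2 * \<alpha>)))
        * sqrt (weighted_sq_sum s x) * sqrt (weighted_sq_sum \<alpha> y)"
proof -
  define S where "S = (\<Sum>\<^sub>\<infinity>k::'d \<Rightarrow> int. jbr k powr (-2 * \<alpha>))"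
  define C where "C = (1 - 10 powr (-1 / (2 * s))) powr (-s)"
  have "0 \<le> S" "0 \<le> C" unfolding S_def C_def by (auto intro: infsum_nonneg)
  then have "sqrt (weighted_sq_sum s (conv x y)) \<le>
      sqrt (20 * (S * weighted_sq_sum \<alpha> x * weighted_sq_sum s y))
      + sqrt (2 * C\<^sup>2 * (S * weighted_sq_sum \<alpha> y * weighted_sq_sum s x))"
    using weighted_sq_sum_conv_le[OF assms, folded S_def C_def]
    by (intro order_trans[OF real_sqrt_le_mono sqrt_add_le_add_sqrt])
      (auto intro!: mult_nonneg_nonneg weighted_sq_sum_nonneg)
  also have "\<dots> = sqrt (20 * S) * sqrt (weighted_sq_sum \<alpha> x) * sqrt (weighted_sq_sum s y)
      + C * sqrt (2 * S) * sqrt (weighted_sq_sum s x) * sqrt (weighted_sq_sum \<alpha> y)"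
    using \<open>0 \<le> C\<close> by (simp add: real_sqrt_mult ac_simps)
  finally show ?thesis unfolding S_def C_def .
qed

section \<open>Diagonals of matrix products\<close>

lemma diag_mprod:
  fixes X Y :: "('d::finite) mat"
  shows "diag (mprod X Y) k = (\<lambda>i. \<Sum>\<^sub>\<infinity>l. diag X l i * shift l (diag Y (k - l)) i)"
proof
  fix i
  have "diag (mprod X Y) k i = (\<Sum>\<^sub>\<infinity>m. X i m * Y m (i - k))"
    by (simp add: diag_def mprod_def fun_diff_def)
  also have "\<dots> = (\<Sum>\<^sub>\<infinity>l. X i (i - l) * Y (i - l) (i - k))"
    using infsum_reindex_bij_betw[OF bij_diff[of i], of "\<lambda>m. X i m * Y m (i - k)"] by simp
  also have "\<dots> = (\<Sum>\<^sub>\<infinity>l. diag X l i * shift l (diag Y (k - l)) i)"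
    by (simp add: diag_def shift_def fun_diff_def)
  finally show "diag (mprod X Y) k i = (\<Sum>\<^sub>\<infinity>l. diag X l i * shift l (diag Y (k - l)) i)" .
qed

lemma
  fixes X Y :: "('d::finite) mat"
  assumes "seq_banach_algebra B N" "in_M B X" "in_M B Y"
    and summable: "(\<lambda>l. N (diag X l) * N (diag Y (k - l))) summable_on UNIV"
  shows diag_mprod_mem: "diag (mprod X Y) k \<in> B"
    and N_diag_mprod_le: "N (diag (mprod X Y) k) \<le> conv (\<lambda>l. N (diag X l)) (\<lambda>l. N (diag Y l)) k"
proof -
  interpret seq_banach_alg B N by unfold_locales fact
  define f where "f l = (\<lambda>i. diag X l i * shift l (diag Y (k - l)) i)" for l
  have X: "diag X l \<in> B" and Y: "diag Y l \<in> B" for l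
    using assms(2,3) unfolding in_M_def by auto
  have mem: "f l \<in> B" for l
    unfolding f_def by (intro mult_mem shift_mem X Y)
  have N_f: "N (f l) \<le> N (diag X l) * N (diag Y (k - l))" for l
    unfolding f_def using N_mult_le[OF X shift_mem[OF Y]] N_shift[OF Y] by simp
  have summable_f: "(\<lambda>l. N (f l)) summable_on UNIV"
    by (rule summable_on_comparison_test[OF summable N_f N_nonneg[OF mem]])
  have diag_eq: "diag (mprod X Y) k = (\<lambda>i. \<Sum>\<^sub>\<infinity>l. f l i)"
    unfolding diag_mprod f_def by simp
  show "diag (mprod X Y) k \<in> B"
    unfolding diag_eq by (rule infsum_mem[OF mem summable_f])
  have "N (diag (mprod X Y) k) \<le> (\<Sum>\<^sub>\<infinity>l. N (f l))"
    unfolding diag_eq by (rule N_infsum_le[OF mem summable_f])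
  also have "\<dots> \<le> conv (\<lambda>l. N (diag X l)) (\<lambda>l. N (diag Y l)) k"
    unfolding conv_def by (rule infsum_mono[OF summable_f summable N_f])
  finally show "N (diag (mprod X Y) k) \<le> conv (\<lambda>l. N (diag X l)) (\<lambda>l. N (diag Y l)) k" .
qed

lemma msnorm_eq: "msnorm N s A = sqrt (weighted_sq_sum s (\<lambda>k. N (diag A k)))"
  unfolding msnorm_def weighted_sq_sum_def ..

lemma in_Ms_iff: "in_Ms B N s A \<longleftrightarrow> in_M B A \<and> weighted_sq_summable s (\<lambda>k. N (diag A k))"
  unfolding in_Ms_def weighted_sq_summable_def ..

theorem lemma3p1:
  fixes B :: "('d::finite) seq set" and N :: "'d seq \<Rightarrow> real"
    and \<alpha>0 s :: real and X Y :: "'d mat"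
  assumes "seq_banach_algebra B N"
    and "\<alpha>0 > real CARD('d) / 2"
    and "s \<ge> \<alpha>0"
    and "in_Ms B N s X" and "in_Ms B N s Y"
  shows "in_Ms B N s (mprod X Y) \<and>
    msnorm N s (mprod X Y) \<le>
      sqrt (20 * (\<Sum>\<^sub>\<infinity>k::'d\<Rightarrow>int. jbr k powr (-2 * \<alpha>0))) * msnorm N \<alpha>0 X * msnorm N s Y
    + (1 - 10 powr (-1 / (2 * s))) powr (-s) * sqrt (2 * (\<Sum>\<^sub>\<infinity>k::'d\<Rightarrow>int. jbr k powr (-2 * \<alpha>0)))
        * msnorm N s X * msnorm N \<alpha>0 Y"
proof -
  interpret seq_banach_alg B N by unfold_locales (rule assms(1))
  define x where "x l = N (diag X l)" for l
  define y where "y l = N (diag Y l)" for l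
  have "0 < s" using assms(2,3) by (simp add: less_le_trans)
  have "real CARD('d) < 2 * \<alpha>0" using assms(2) by simp
  then have summable_jbr: "(\<lambda>k::'d \<Rightarrow> int. jbr k powr (-2 * \<alpha>0)) summable_on UNIV"
    using summable_on_jbr_powr by simp
  have X: "in_M B X" "weighted_sq_summable s x" and Y: "in_M B Y" "weighted_sq_summable s y"
    using assms(4,5) unfolding in_Ms_iff x_def y_def by auto
  have x: "0 \<le> x l" and y: "0 \<le> y l" for l
    using X(1) Y(1) N_nonneg unfolding x_def y_def in_M_def by auto
  note conv_facts = summable_on_conv_terms_of_weighted weighted_sq_summable_conv
    sqrt_weighted_sq_sum_conv_le
  note conv = conv_facts[OF x y \<open>0 < s\<close> assms(3) summable_jbr X(2) Y(2)]
  have diag: "diag (mprod X Y) k \<in> B" "N (diag (mprod X Y) k) \<le> conv x y k" for k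
    using diag_mprod_mem[OF assms(1) X(1) Y(1) conv(1)[unfolded x_def y_def]]
      N_diag_mprod_le[OF assms(1) X(1) Y(1) conv(1)[unfolded x_def y_def]]
    unfolding x_def y_def by auto
  note comparison = N_nonneg[OF diag(1)] diag(2) conv(2)
  have "weighted_sq_summable s (\<lambda>k. N (diag (mprod X Y) k))"
    "weighted_sq_sum s (\<lambda>k. N (diag (mprod X Y) k)) \<le> weighted_sq_sum s (conv x y)"
    using weighted_sq_summable_le[OF comparison] weighted_sq_sum_le[OF comparison] .
  then show ?thesis
    using diag(1) order_trans[OF real_sqrt_le_mono conv(3)]
    unfolding in_Ms_iff msnorm_eq in_M_def x_def y_def by auto
qed

end
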